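(* There exists a function $\phi:\mathbb{R}\to\mathbb{R}$ generated by a $\sigma$-activated network with width $3$ and depth $2$ such that $\phi(x)=x^2$ for all $x\in[-1,1]$.
   Context: Let $\sigma_1:\mathbb{R}\to\mathbb{R}$ be the continuous triangular-wave function of period $2$: $\sigma_1(x)=|x|$ for $x\in[-1,1]$, $\sigma_1(x+2)=\sigma_1(x)$. The activation is $\sigma(x)=\sigma_1(x)$ for $x\ge0$ and $\sigma(x)=x/(|x|+1)$ for $x<0$, applied entrywise. A function generated by a $\sigma$-activated network with one input, width $N$ and depth $L$ is a function of the form $\mathcal{L}_{\ell}\circ\sigma\circ\mathcal{L}_{\ell-1}\circ\cdots\circ\sigma\circ\mathcal{L}_0$ with $\ell\le L$ hidden layers, affine maps $\mathcal{L}_i$, $\mathcal{L}_0$ with domain $\mathbb{R}$, $\mathcal{L}_\ell$ with codomain $\mathbb{R}$, and at most $N$ neurons in each hidden layer. *)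

theory Defs
  imports Complex_Main
begin

(* Triangular wave of period 2: |x| on [-1,1], extended 2-periodically.
   x - 2*floor((x+1)/2) is the representative of x in [-1,1). *)
definition sigma1 :: "real \<Rightarrow> real" where
  "sigma1 x = \<bar>x - 2 * of_int \<lfloor>(x + 1) / 2\<rfloor>\<bar>"

definition sigma :: "real \<Rightarrow> real" where
  "sigma x = (if x \<ge> 0 then sigma1 x else x / (\<bar>x\<bar> + 1))"

(* hidden N l n h : h x is the output (entries 0..n-1) of the l-th hidden layer
   of a sigma-activated network with one input and at most N neurons per
   hidden layer; the last hidden layer has exactly n neurons. *)
inductive hidden :: "nat \<Rightarrow> nat \<Rightarrow> nat \<Rightarrow> (real \<Rightarrow> nat \<Rightarrow> real) \<Rightarrow> bool"
  for N :: nat where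
  first: "\<lbrakk>1 \<le> n; n \<le> N\<rbrakk> \<Longrightarrow>
     hidden N 1 n (\<lambda>x i. sigma (w i * x + b i))"
| step: "\<lbrakk>hidden N l m h; 1 \<le> n; n \<le> N\<rbrakk> \<Longrightarrow>
     hidden N (Suc l) n (\<lambda>x i. sigma ((\<Sum>j<m. W i j * h x j) + b i))"

definition generated_by_net :: "nat \<Rightarrow> nat \<Rightarrow> (real \<Rightarrow> real) \<Rightarrow> bool" where
  "generated_by_net N L \<phi> \<longleftrightarrow>
     (\<exists>l m h c d. 1 \<le> l \<and> l \<le> L \<and> hidden N l m h \<and>
        \<phi> = (\<lambda>x. (\<Sum>j<m. c j * h x j) + d))"

end

theory Submission
  imports Defs
begin

(* The construction exploits that the negative branch of sigma is a reciprocal up to affine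
   maps, t / (1 - t) = 1 / (1 - t) - 1.  The first layer computes 1/(3 - x) and 1/(3 + x),
   whose sum is 6 / (9 - x^2); the second layer inverts this reciprocal, which leaves
   9 - x^2 up to an affine map. *)

lemma sigma_neg_reciprocal:
  assumes "t < 0"
  shows "sigma t = 1 / (1 - t) - 1"
  using assms unfolding sigma_def by (simp add: field_simps)

lemma sigma_one_minus_inverse:
  assumes "0 < y" "y < 1"
  shows "sigma (1 - 1 / y) = y - 1"
proof -
  have "1 - 1 / y < 0" using assms by (simp add: field_simps)
  then show ?thesis using assms by (simp add: sigma_neg_reciprocal)
qed

lemma generated_by_net_depth2:
  assumes "1 \<le> m" "m \<le> N" "1 \<le> n" "n \<le> N" "2 \<le> L"
  shows "generated_by_net N L
    (\<lambda>x. (\<Sum>k<n. c k * sigma ((\<Sum>j<m. W k j * sigma (w j * x + b j)) + b' k)) + d)"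
proof -
  have "hidden N 1 m (\<lambda>x j. sigma (w j * x + b j))"
    using assms by (intro hidden.first)
  then have "hidden N (Suc 1) n (\<lambda>x k. sigma ((\<Sum>j<m. W k j * sigma (w j * x + b j)) + b' k))"
    using assms by (intro hidden.step)
  then show ?thesis
    unfolding generated_by_net_def using assms by (intro exI conjI) (auto simp: numeral_2_eq_2)
qed

theorem lemma17:
  shows "\<exists>\<phi>. generated_by_net 3 2 \<phi> \<and> (\<forall>x::real. -1 \<le> x \<and> x \<le> 1 \<longrightarrow> \<phi> x = x ^ 2)"
proof (intro exI conjI allI impI)
  define \<phi> where "\<phi> x = -12 * sigma (-2 * sigma (x - 2) - 2 * sigma (- x - 2) - 3) - 3" for x
  have "generated_by_net 3 2 (\<lambda>x. (\<Sum>k::nat<1. (-12) * sigma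
          ((\<Sum>j::nat<2. (-2) * sigma ((if j = 0 then 1 else -1) * x + (-2))) + (-3))) + (-3))"
    by (rule generated_by_net_depth2) auto
  also have "(\<lambda>x. (\<Sum>k::nat<1. (-12) * sigma
          ((\<Sum>j::nat<2. (-2) * sigma ((if j = 0 then 1 else -1) * x + (-2))) + (-3))) + (-3)) = \<phi>"
    by (simp add: \<phi>_def fun_eq_iff numeral_2_eq_2 add.commute add.left_commute)
  finally show "generated_by_net 3 2 \<phi>" .
  fix x :: real
  assume "-1 \<le> x \<and> x \<le> 1"
  then have x: "-1 \<le> x" "x \<le> 1" by auto
  define y where "y = (9 - x ^ 2) / 12"
  have "x ^ 2 \<le> 1" using x by (simp add: abs_square_le_1)
  then have y: "0 < y" "y < 1"
    unfolding y_def using zero_le_power2[of x] by (simp_all only: field_simps)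
  have "sigma (x - 2) = 1 / (3 - x) - 1" "sigma (- x - 2) = 1 / (3 + x) - 1"
    using x by (simp_all add: sigma_neg_reciprocal)
  moreover have "1 / (3 - x) + 1 / (3 + x) = 1 / (2 * y)"
    using x y(1) by (simp add: y_def field_simps power2_eq_square)
  ultimately have "-2 * sigma (x - 2) - 2 * sigma (- x - 2) - 3 = 1 - 1 / y"
    by (simp add: algebra_simps)
  then have "\<phi> x = -12 * sigma (1 - 1 / y) - 3"
    unfolding \<phi>_def by (rule arg_cong)
  also have "\<dots> = x ^ 2"
    by (simp add: sigma_one_minus_inverse[OF y]) (simp add: y_def field_simps)
  finally show "\<phi> x = x ^ 2" .
qed

end
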